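(* Let $n\ge5$ be any integer, $r\in\mathbb Z_n$, $\mathsf V=\mathsf V(3,r)$ and $k\ge2$. Then for all $1\le i\le k-1$, on $\mathsf V^{\otimes k}$, $$(\check{\mathsf R}_i-q^{-r^2-2r}\mathrm{id})(\check{\mathsf R}_i+q^{-r^2-2r-2}\mathrm{id})(\check{\mathsf R}_i-q^{-r^2-2r-3}\mathrm{id})=0.$$
   Context: $\mathbb k$ algebraically closed of characteristic zero, $n\ge2$, $q\in\mathbb k$ a primitive $n$th root of unity. $\mathsf D_n$ is the Hopf algebra generated by $a,b,c,d$ with relations $ba=qab$, $db=qbd$, $bc=cb$, $ca=qac$, $dc=qcd$, $da-qad=1-bc$, $a^n=d^n=0$, $b^n=c^n=1$ and $\Delta(a)=a\otimes b+1\otimes a$, $\Delta(d)=d\otimes c+1\otimes d$, $\Delta(b)=b\otimes b$, $\Delta(c)=c\otimes c$. For $1\le\ell\le n$, $s\in\mathbb Z_n$, $\mathsf V(\ell,s)$ is the module with basis $v_1,\dots,v_\ell$ and action $a.v_j=v_{j+1}$ ($j<\ell$), $a.v_\ell=0$, $b.v_j=q^{s+j-1}v_j$, $c.v_j=q^{j-(s+\ell)}v_j$, $d.v_1=0$, $d.v_j=\alpha_{j-1}(\ell)v_{j-1}$ ($j>1$), $\alpha_i(\ell)=\frac{(q^i-1)(1-q^{i-\ell})}{q-1}$. With $[m]=1+q+\dots+q^{m-1}$, $[m]!=[m]\cdots[1]$, $[0]!=1$, the R-matrix is $\mathcal R=\frac1n\sum_{m,s,t=0}^{n-1}\frac{q^{-tm}}{[s]!}a^sb^t\otimes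 c^md^s$. $\mathsf R$ is the action of $\mathcal R$ on $\mathsf V\otimes\mathsf V$ ($a^sb^t$ on the first factor), $\sigma$ the flip, $\check{\mathsf R}=\sigma\mathsf R$, and $\check{\mathsf R}_i=\mathrm{id}^{\otimes(i-1)}\otimes\check{\mathsf R}\otimes\mathrm{id}^{\otimes(k-i-1)}$ on $\mathsf V^{\otimes k}$. *)

theory Defs
  imports "HOL-Computational_Algebra.Polynomial"
begin

definition alg_closed_field :: "'a::field itself \<Rightarrow> bool" where
  "alg_closed_field _ \<longleftrightarrow> (\<forall>p::'a poly. degree p \<ge> 1 \<longrightarrow> (\<exists>x. poly p x = 0))"

definition primitive_root :: "nat \<Rightarrow> 'a::field \<Rightarrow> bool" where
  "primitive_root n q \<longleftrightarrow> q ^ n = 1 \<and> (\<forall>m. 0 < m \<and> m < n \<longrightarrow> q ^ m \<noteq> 1)"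

text \<open>Linear maps as matrices M y x (coefficient of basis vector y in the image of basis vector x)
  over a finite index set S of basis vectors.\<close>
definition mmul :: "'i set \<Rightarrow> ('i \<Rightarrow> 'i \<Rightarrow> 'a::comm_ring_1) \<Rightarrow> ('i \<Rightarrow> 'i \<Rightarrow> 'a) \<Rightarrow> 'i \<Rightarrow> 'i \<Rightarrow> 'a" where
  "mmul S M N y x = (\<Sum>z\<in>S. M y z * N z x)"

definition mid :: "'i \<Rightarrow> 'i \<Rightarrow> 'a::comm_ring_1" where
  "mid y x = (if y = x then 1 else 0)"

fun mpow :: "'i set \<Rightarrow> ('i \<Rightarrow> 'i \<Rightarrow> 'a::comm_ring_1) \<Rightarrow> nat \<Rightarrow> 'i \<Rightarrow> 'i \<Rightarrow> 'a" where
  "mpow S M 0 = mid"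
| "mpow S M (Suc m) = mmul S M (mpow S M m)"

definition qint :: "'a::field \<Rightarrow> nat \<Rightarrow> 'a" where
  "qint q m = (\<Sum>i<m. q ^ i)"

definition qfact :: "'a::field \<Rightarrow> nat \<Rightarrow> 'a" where
  "qfact q m = (\<Prod>i\<in>{1..m}. qint q i)"

definition alpha :: "'a::field \<Rightarrow> nat \<Rightarrow> nat \<Rightarrow> 'a" where
  "alpha q l i = (q ^ i - 1) * (1 - q powi (int i - int l)) / (q - 1)"

text \<open>The module V(l,s) with basis v_1..v_l (indices 1..l); actions of a,b,c,d.\<close>
definition Vbasis :: "nat \<Rightarrow> nat set" where
  "Vbasis l = {1..l}"

definition actA :: "nat \<Rightarrow> nat \<Rightarrow> nat \<Rightarrow> 'a::field" where
  "actA l y x = (if x < l \<and> y = x + 1 then 1 else 0)"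

definition actB :: "'a::field \<Rightarrow> int \<Rightarrow> nat \<Rightarrow> nat \<Rightarrow> 'a" where
  "actB q s y x = (if y = x then q powi (s + int x - 1) else 0)"

definition actC :: "'a::field \<Rightarrow> nat \<Rightarrow> int \<Rightarrow> nat \<Rightarrow> nat \<Rightarrow> 'a" where
  "actC q l s y x = (if y = x then q powi (int x - (s + int l)) else 0)"

definition actD :: "'a::field \<Rightarrow> nat \<Rightarrow> nat \<Rightarrow> nat \<Rightarrow> 'a" where
  "actD q l y x = (if x > 1 \<and> y = x - 1 then alpha q l (x - 1) else 0)"

definition Rmat :: "nat \<Rightarrow> 'a::field \<Rightarrow> nat \<Rightarrow> int \<Rightarrow> nat \<times> nat \<Rightarrow> nat \<times> nat \<Rightarrow> 'a" where
  "Rmat n q l s y x =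
     (1 / of_nat n) * (\<Sum>m<n. \<Sum>e<n. \<Sum>t<n.
        (q powi (- (int t * int m)) / qfact q e)
        * mmul (Vbasis l) (mpow (Vbasis l) (actA l) e) (mpow (Vbasis l) (actB q s) t) (fst y) (fst x)
        * mmul (Vbasis l) (mpow (Vbasis l) (actC q l s) m) (mpow (Vbasis l) (actD q l) e) (snd y) (snd x))"

definition Rcheck :: "nat \<Rightarrow> 'a::field \<Rightarrow> nat \<Rightarrow> int \<Rightarrow> nat \<times> nat \<Rightarrow> nat \<times> nat \<Rightarrow> 'a" where
  "Rcheck n q l s y x = Rmat n q l s (snd y, fst y) x"

text \<open>Basis of V^{(x)k}: words of length k over {1..l}.\<close>
definition Words :: "nat \<Rightarrow> nat \<Rightarrow> nat list set" where
  "Words l k = {w. length w = k \<and> set w \<subseteq> Vbasis l}"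

text \<open>Rcheck_i acting on tensor factors i and i+1 (1-based), i.e. list positions i-1 and i.\<close>
definition Rcheck_i :: "nat \<Rightarrow> 'a::field \<Rightarrow> nat \<Rightarrow> int \<Rightarrow> nat \<Rightarrow> nat list \<Rightarrow> nat list \<Rightarrow> 'a" where
  "Rcheck_i n q l s i y x =
     (if (\<forall>p < length x. p \<noteq> i - 1 \<and> p \<noteq> i \<longrightarrow> y ! p = x ! p)
      then Rcheck n q l s (y ! (i - 1), y ! i) (x ! (i - 1), x ! i) else 0)"

end

theory Submission
  imports Defs
begin

(* Powers of a and d act by shifts and powers of b and c diagonally, so in the sum defining R
   only the power a^e with e = y1 - x1 contributes to the entry at ((y1, y2), (x1, x2)), and the
   remaining double sum over m, t is a character sum of Z/n collapsing to the single power
   q^((s + x1 - 1)(y2 - s - l)). For V(3, r) this exhibits Rcheck as q^(-r^2-2r) times a 9 x 9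
   matrix N depending on r only through u = q^(-r), and (N - 1)(N + q^-2)(N - q^-3) = 0 is then a
   direct computation, valid for every q with q^2 <> 1 and every u <> 0. Finally
   Rcheck_i = id (x) Rcheck (x) id, and A |-> id (x) A (x) id is multiplicative, so the cubic
   relation transfers to V^(x)k. *)

section \<open>Character sums\<close>

lemma primitive_root_nonzero:
  assumes "primitive_root n (q::'a::field)" "0 < n"
  shows "q \<noteq> 0"
  using assms unfolding primitive_root_def by (cases n) auto

lemma primitive_root_power_int_mod:
  assumes "primitive_root n (q::'a::field)" "0 < n"
  shows "q powi j = q powi (j mod int n)"
proof -
  have "q powi (int n * (j div int n)) = (q ^ n) powi (j div int n)"
    by (simp add: power_int_mult)
  also have "\<dots> = 1" using assms(1) by (simp add: primitive_root_def)
  finally have "q powi (int n * (j div int n)) = 1" .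
  moreover have "q powi j = q powi (j mod int n) * q powi (int n * (j div int n))"
    using primitive_root_nonzero[OF assms] by (simp flip: power_int_add)
  ultimately show ?thesis by simp
qed

lemma primitive_root_power_int_eq_1_iff:
  assumes "primitive_root n (q::'a::field)" "0 < n"
  shows "q powi j = 1 \<longleftrightarrow> int n dvd j"
proof -
  define m where "m = nat (j mod int n)"
  have "m < n" and j_mod: "j mod int n = int m"
    using assms(2) by (simp_all add: m_def nat_less_iff)
  have "q powi j = q ^ m"
    using primitive_root_power_int_mod[OF assms, of j] by (simp add: j_mod)
  moreover have "q ^ m = 1 \<longleftrightarrow> m = 0"
    using assms(1) \<open>m < n\<close> unfolding primitive_root_def by auto
  ultimately show ?thesis using j_mod by (simp add: dvd_eq_mod_eq_0)
qed

lemma sum_powers_primitive_root: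
  assumes "primitive_root n (q::'a::field)" "0 < n"
  shows "(\<Sum>t<n. (q powi j) ^ t) = (if int n dvd j then of_nat n else 0)"
proof (cases "int n dvd j")
  case False
  have "(q powi j) ^ n = (q ^ n) powi j"
    by (metis mult.commute power_int_mult power_int_of_nat)
  also have "\<dots> = 1" using assms(1) by (simp add: primitive_root_def)
  finally show ?thesis
    using False primitive_root_power_int_eq_1_iff[OF assms] by (simp add: geometric_sum)
qed (use primitive_root_power_int_eq_1_iff[OF assms, of j] in simp)

lemma primitive_root_character_sum:
  assumes "primitive_root n (q::'a::field_char_0)" "0 < n"
  shows "(1 / of_nat n) * (\<Sum>m<n. \<Sum>t<n. q powi (- (int t * int m)) * (q powi A) ^ t * (q powi B) ^ m)
    = q powi (A * B)"
proof -
  have q0: "q \<noteq> 0" by (rule primitive_root_nonzero[OF assms])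
  define m0 where "m0 = nat (A mod int n)"
  have "m0 < n" and A_mod: "A mod int n = int m0"
    using assms(2) by (simp_all add: m0_def nat_less_iff)
  have summand: "q powi (- (int t * int m)) * (q powi A) ^ t * (q powi B) ^ m
      = (q powi B) ^ m * (q powi (A - int m)) ^ t" for m t
  proof -
    have "(q powi A) ^ t = q powi (A * int t)"
      by (simp add: power_int_mult)
    then have "q powi (- (int t * int m)) * (q powi A) ^ t = q powi (- (int t * int m) + A * int t)"
      using q0 power_int_add [of q "- (int t * int m)" "A * int t"] by simp
    also have "- (int t * int m) + A * int t = (A - int m) * int t"
      by (simp add: algebra_simps)
    finally have "q powi (- (int t * int m)) * (q powi A) ^ t = q powi ((A - int m) * int t)" .
    then show ?thesis by (simp add: power_int_mult)
  qed
  have dvd_iff: "int n dvd (A - int m) \<longleftrightarrow> m = m0" if "m < n" for m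
    using that A_mod by (auto simp flip: mod_eq_dvd_iff)
  have "(\<Sum>m<n. \<Sum>t<n. q powi (- (int t * int m)) * (q powi A) ^ t * (q powi B) ^ m)
      = (\<Sum>m<n. (q powi B) ^ m * (\<Sum>t<n. (q powi (A - int m)) ^ t))"
    by (simp add: summand sum_distrib_left)
  also have "\<dots> = (\<Sum>m<n. if m = m0 then of_nat n * (q powi B) ^ m else 0)"
    by (intro sum.cong) (auto simp: sum_powers_primitive_root[OF assms] dvd_iff)
  also have "\<dots> = of_nat n * q powi (B * (A mod int n))"
    using \<open>m0 < n\<close> by (simp add: A_mod power_int_mult)
  also have "q powi (B * (A mod int n)) = q powi (A * B)"
    using primitive_root_power_int_mod[OF assms]
    by (metis mod_mult_right_eq mult.commute)
  finally show ?thesis using assms(2) by simp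
qed

section \<open>Matrix identities\<close>

lemma mmul_cong:
  assumes "\<And>a b. a \<in> S \<Longrightarrow> b \<in> S \<Longrightarrow> M a b = M' a b"
    and "\<And>a b. a \<in> S \<Longrightarrow> b \<in> S \<Longrightarrow> N a b = N' a b"
    and "y \<in> S" "x \<in> S"
  shows "mmul S M N y x = mmul S M' N' y x"
  unfolding mmul_def using assms by (intro sum.cong) auto

lemma mmul_scale:
  "mmul S (\<lambda>a b. c * M a b) (\<lambda>a b. d * N a b) y x = c * d * mmul S M N y x"
  unfolding mmul_def by (simp add: sum_distrib_left ac_simps)

lemma mmul_diagonal_left:
  assumes "finite S" "y \<in> S" "\<And>z. z \<in> S \<Longrightarrow> M y z = (if y = z then c else 0)"
  shows "mmul S M N y x = c * N y x"
proof -
  have "mmul S M N y x = (\<Sum>z\<in>S. if y = z then c * N y x else 0)"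
    unfolding mmul_def using assms(3) by (intro sum.cong) auto
  then show ?thesis using assms(1,2) by simp
qed

lemma mmul_diagonal_right:
  assumes "finite S" "x \<in> S" "\<And>z. z \<in> S \<Longrightarrow> N z x = (if z = x then c else 0)"
  shows "mmul S M N y x = M y x * c"
proof -
  have "mmul S M N y x = (\<Sum>z\<in>S. if z = x then M y x * c else 0)"
    unfolding mmul_def using assms(3) by (intro sum.cong) auto
  then show ?thesis using assms(1,2) by simp
qed

lemma mpow_diagonal:
  assumes "finite S" "\<And>y z. M y z = (if y = z then f z else 0)" "x \<in> S"
  shows "mpow S M t y x = (if y = x then f x ^ t else 0)"
proof (induction t arbitrary: y)
  case 0
  show ?case by (simp add: mid_def)
next
  case (Suc t)
  have "mpow S M (Suc t) y x = M y x * f x ^ t"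
    using mmul_diagonal_right[OF assms(1,3), of "mpow S M t" "f x ^ t"] Suc.IH by simp
  then show ?case using assms(2)[of y x] by simp
qed

definition cubic_relation :: "'i set \<Rightarrow> ('i \<Rightarrow> 'i \<Rightarrow> 'a::comm_ring_1) \<Rightarrow> 'a \<Rightarrow> 'a \<Rightarrow> 'a \<Rightarrow> bool" where
  "cubic_relation S F \<mu>1 \<mu>2 \<mu>3 \<longleftrightarrow> (\<forall>a\<in>S. \<forall>b\<in>S.
     mmul S (mmul S (\<lambda>a b. F a b - \<mu>1 * mid a b) (\<lambda>a b. F a b - \<mu>2 * mid a b))
       (\<lambda>a b. F a b - \<mu>3 * mid a b) a b = 0)"

lemma cubic_relation_scale:
  assumes "\<And>a b. a \<in> S \<Longrightarrow> b \<in> S \<Longrightarrow> F a b = c * N a b" and "cubic_relation S N \<mu>1 \<mu>2 \<mu>3"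
  shows "cubic_relation S F (c * \<mu>1) (c * \<mu>2) (c * \<mu>3)"
proof -
  have factor: "F a b - c * \<mu> * mid a b = c * (N a b - \<mu> * mid a b)" if "a \<in> S" "b \<in> S" for a b \<mu>
    using assms(1)[OF that] by (simp add: algebra_simps)
  have inner: "mmul S (\<lambda>a b. F a b - c * \<mu>1 * mid a b) (\<lambda>a b. F a b - c * \<mu>2 * mid a b) a b
      = c * c * mmul S (\<lambda>a b. N a b - \<mu>1 * mid a b) (\<lambda>a b. N a b - \<mu>2 * mid a b) a b"
    if "a \<in> S" "b \<in> S" for a b
    using mmul_cong[OF factor factor that] by (simp only: mmul_scale)
  have "mmul S (mmul S (\<lambda>a b. F a b - c * \<mu>1 * mid a b) (\<lambda>a b. F a b - c * \<mu>2 * mid a b))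
      (\<lambda>a b. F a b - c * \<mu>3 * mid a b) a b
    = c * c * c * mmul S (mmul S (\<lambda>a b. N a b - \<mu>1 * mid a b) (\<lambda>a b. N a b - \<mu>2 * mid a b))
      (\<lambda>a b. N a b - \<mu>3 * mid a b) a b"
    if "a \<in> S" "b \<in> S" for a b
    using mmul_cong[OF inner factor that] by (simp only: mmul_scale)
  then show ?thesis
    using assms(2) by (simp add: cubic_relation_def)
qed

section \<open>Entries of the R-matrix\<close>

lemma finite_Vbasis [simp]: "finite (Vbasis l)"
  by (simp add: Vbasis_def)

lemma mpow_actA:
  assumes "x \<in> Vbasis l"
  shows "mpow (Vbasis l) (actA l) e y x = (if y = x + e \<and> y \<le> l then 1 else 0)"
proof (induction e arbitrary: y)
  case 0
  then show ?case using assms by (auto simp: mid_def Vbasis_def)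
next
  case (Suc e)
  have "mpow (Vbasis l) (actA l) (Suc e) y x
      = (\<Sum>z\<in>Vbasis l. if z = x + e then (if z < l \<and> y = z + 1 then 1 else 0) else (0::'a))"
    unfolding mpow.simps mmul_def Suc.IH by (intro sum.cong) (auto simp: actA_def)
  also have "\<dots> = (if y = x + Suc e \<and> y \<le> l then 1 else 0)"
    using assms by (auto simp: Vbasis_def)
  finally show ?case .
qed

lemma mpow_actB:
  "x \<in> Vbasis l \<Longrightarrow> mpow (Vbasis l) (actB q s) t y x = (if y = x then (q powi (s + int x - 1)) ^ t else 0)"
  by (rule mpow_diagonal[OF finite_Vbasis actB_def])

lemma mpow_actC:
  "x \<in> Vbasis l \<Longrightarrow> mpow (Vbasis l) (actC q l s) t y x = (if y = x then (q powi (int x - (s + int l))) ^ t else 0)"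
  by (rule mpow_diagonal[OF finite_Vbasis actC_def])

lemma mpow_actD:
  assumes "x \<in> Vbasis l"
  shows "mpow (Vbasis l) (actD q l) e y x
    = (if 1 \<le> y \<and> y + e = x then (\<Prod>j\<in>{y..<x}. alpha q l j) else 0)"
proof (induction e arbitrary: y)
  case 0
  then show ?case using assms by (auto simp: mid_def Vbasis_def)
next
  case (Suc e)
  have "mpow (Vbasis l) (actD q l) (Suc e) y x
      = (\<Sum>z\<in>Vbasis l. if z = Suc y then actD q l y z * mpow (Vbasis l) (actD q l) e z x else 0)"
    unfolding mpow.simps mmul_def by (intro sum.cong) (auto simp: actD_def)
  also have "\<dots> = (if Suc y \<in> Vbasis l then actD q l y (Suc y) * mpow (Vbasis l) (actD q l) e (Suc y) x else 0)"
    by simp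
  also have "\<dots> = (if 1 \<le> y \<and> y + Suc e = x then (\<Prod>j\<in>{y..<x}. alpha q l j) else 0)"
    unfolding Suc.IH using assms by (auto simp: actD_def Vbasis_def prod.atLeast_Suc_lessThan)
  finally show ?case .
qed

lemma Rmat_eq:
  fixes q :: "'a::field_char_0"
  assumes q: "primitive_root n q" and "l \<le> n"
    and y1: "y1 \<in> Vbasis l" and y2: "y2 \<in> Vbasis l" and x1: "x1 \<in> Vbasis l" and x2: "x2 \<in> Vbasis l"
  shows "Rmat n q l s (y1, y2) (x1, x2) =
    (if x1 \<le> y1 \<and> y2 + (y1 - x1) = x2
     then (\<Prod>j\<in>{y2..<x2}. alpha q l j) / qfact q (y1 - x1)
          * q powi ((s + int x1 - 1) * (int y2 - (s + int l)))
     else 0)"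
proof -
  let ?V = "Vbasis l"
  define \<beta> where "\<beta> = q powi (s + int x1 - 1)"
  define \<gamma> where "\<gamma> = q powi (int y2 - (s + int l))"
  define e0 where "e0 = y1 - x1"
  define K where "K = mpow ?V (actD q l) e0 y2 x2 / qfact q e0"
  have "0 < n" and "e0 < n" and "1 \<le> y2" using assms by (auto simp: Vbasis_def e0_def)
  have "mmul ?V (mpow ?V (actA l) e) (mpow ?V (actB q s) t) y1 x1 = (if y1 = x1 + e then \<beta> ^ t else 0)"
    for e t
  proof -
    have "mmul ?V (mpow ?V (actA l) e) (mpow ?V (actB q s) t) y1 x1 = mpow ?V (actA l) e y1 x1 * \<beta> ^ t"
      by (rule mmul_diagonal_right[OF finite_Vbasis x1]) (simp add: mpow_actB[OF x1] \<beta>_def)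
    moreover have "y1 \<le> l" using y1 by (simp add: Vbasis_def)
    ultimately show ?thesis by (simp add: mpow_actA[OF x1])
  qed
  moreover have "mmul ?V (mpow ?V (actC q l s) m) (mpow ?V (actD q l) e) y2 x2
      = \<gamma> ^ m * mpow ?V (actD q l) e y2 x2" for e m
    by (rule mmul_diagonal_left[OF finite_Vbasis y2]) (simp add: mpow_actC \<gamma>_def)
  ultimately have summand: "q powi (- (int t * int m)) / qfact q e
      * mmul ?V (mpow ?V (actA l) e) (mpow ?V (actB q s) t) y1 x1
      * mmul ?V (mpow ?V (actC q l s) m) (mpow ?V (actD q l) e) y2 x2
    = (if x1 \<le> y1 \<and> e = e0 then K * (q powi (- (int t * int m)) * \<beta> ^ t * \<gamma> ^ m) else 0)" for e t m
    by (auto simp: e0_def K_def)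
  have collapse: "(\<Sum>e<n. \<Sum>t<n. if x1 \<le> y1 \<and> e = e0 then K * g t else 0)
      = (if x1 \<le> y1 then K * (\<Sum>t<n. g t) else 0)" for g :: "nat \<Rightarrow> 'a"
  proof -
    have "(\<Sum>e<n. \<Sum>t<n. if x1 \<le> y1 \<and> e = e0 then K * g t else 0)
        = (\<Sum>e<n. if e = e0 then (if x1 \<le> y1 then K * (\<Sum>t<n. g t) else 0) else 0)"
      by (intro sum.cong) (auto simp: sum_distrib_left)
    then show ?thesis using \<open>e0 < n\<close> by simp
  qed
  have "Rmat n q l s (y1, y2) (x1, x2) = (if x1 \<le> y1 then
      K * ((1 / of_nat n) * (\<Sum>m<n. \<Sum>t<n. q powi (- (int t * int m)) * \<beta> ^ t * \<gamma> ^ m)) else 0)"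
    unfolding Rmat_def fst_conv snd_conv summand collapse
    by (simp add: sum_distrib_left sum_divide_distrib mult_ac)
  also have "\<dots> = (if x1 \<le> y1 then K * q powi ((s + int x1 - 1) * (int y2 - (s + int l))) else 0)"
    unfolding \<beta>_def \<gamma>_def primitive_root_character_sum[OF q \<open>0 < n\<close>] ..
  finally show ?thesis
    using \<open>1 \<le> y2\<close> by (auto simp: K_def e0_def mpow_actD[OF x2])
qed

section \<open>Operators on adjacent tensor factors\<close>

lemma finite_Words: "finite (Words l k)"
proof -
  have "Words l k = {w. set w \<subseteq> Vbasis l \<and> length w = k}"
    by (auto simp: Words_def)
  then show ?thesis by (simp add: finite_lists_length_eq)
qed

definition agree_off :: "nat \<Rightarrow> nat list \<Rightarrow> nat list \<Rightarrow> bool" where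
  "agree_off i y x \<longleftrightarrow> (\<forall>p<length x. p \<noteq> i - 1 \<and> p \<noteq> i \<longrightarrow> y ! p = x ! p)"

definition pair_at :: "nat \<Rightarrow> nat list \<Rightarrow> nat \<times> nat" where
  "pair_at i w = (w ! (i - 1), w ! i)"

(* id^(i-1) (x) F (x) id^(k-i-1): F acts on the tensor factors i and i+1, i.e. list positions i-1 and i *)
definition local_op :: "nat \<Rightarrow> (nat \<times> nat \<Rightarrow> nat \<times> nat \<Rightarrow> 'a::zero) \<Rightarrow> nat list \<Rightarrow> nat list \<Rightarrow> 'a" where
  "local_op i F y x = (if agree_off i y x then F (pair_at i y) (pair_at i x) else 0)"

lemma Rcheck_i_eq_local_op: "Rcheck_i n q l s i = local_op i (Rcheck n q l s)"
  by (auto simp: fun_eq_iff Rcheck_i_def local_op_def agree_off_def pair_at_def)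

lemma pair_at_in_Words:
  assumes "w \<in> Words l k" "i < k"
  shows "pair_at i w \<in> Vbasis l \<times> Vbasis l"
  using assms nth_mem[of "i - 1" w] nth_mem[of i w] by (auto simp: Words_def pair_at_def)

lemma mid_eq_local_op:
  assumes "length y = length x" "i < length x"
  shows "mid y x = local_op i mid y x"
proof -
  have "y = x \<longleftrightarrow> agree_off i y x \<and> pair_at i y = pair_at i x"
    using assms by (auto simp: agree_off_def pair_at_def list_eq_iff_nth_eq)
  then show ?thesis by (auto simp: local_op_def mid_def)
qed

lemma local_op_minus_mid:
  assumes "length y = length x" "i < length x"
  shows "local_op i F y x - c * mid y x = local_op i (\<lambda>a b. F a b - c * mid a b) y x"
  unfolding mid_eq_local_op[OF assms] by (simp add: local_op_def)

lemma mmul_local_op: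
  assumes y: "y \<in> Words l k" and x: "x \<in> Words l k" and "1 \<le> i" "i < k"
  shows "mmul (Words l k) (local_op i F) (local_op i G) y x
    = local_op i (mmul (Vbasis l \<times> Vbasis l) F G) y x"
proof (cases "agree_off i y x")
  case False
  have "local_op i F y z * local_op i G z x = 0" if "z \<in> Words l k" for z
    using False that x by (auto simp: local_op_def agree_off_def Words_def)
  then show ?thesis using False by (simp add: mmul_def local_op_def)
next
  case True
  let ?W = "Words l k" and ?S = "Vbasis l \<times> Vbasis l"
  let ?A = "{z \<in> ?W. agree_off i z y}"
  have "length y = k" "length x = k" using x y by (auto simp: Words_def)
  have agree_iff: "agree_off i z x \<longleftrightarrow> agree_off i z y" "agree_off i y z \<longleftrightarrow> agree_off i z y"
    if "z \<in> ?W" for z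
    using True that \<open>length y = k\<close> \<open>length x = k\<close> by (auto simp: agree_off_def Words_def)
  have "mmul ?W (local_op i F) (local_op i G) y x
      = (\<Sum>z\<in>?W. if agree_off i z y then F (pair_at i y) (pair_at i z) * G (pair_at i z) (pair_at i x) else 0)"
    unfolding mmul_def local_op_def by (intro sum.cong) (auto simp: agree_iff)
  also have "\<dots> = (\<Sum>z\<in>?A. F (pair_at i y) (pair_at i z) * G (pair_at i z) (pair_at i x))"
    by (simp add: finite_Words sum.inter_filter)
  also have "\<dots> = (\<Sum>ab\<in>?S. F (pair_at i y) ab * G ab (pair_at i x))"
  proof (rule sum.reindex_bij_witness[where i = "\<lambda>(a, b). y[i - 1 := a, i := b]" and j = "pair_at i"])
    fix z assume z: "z \<in> ?A"
    then show "pair_at i z \<in> ?S" using pair_at_in_Words \<open>i < k\<close> by blast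
    show "(case pair_at i z of (a, b) \<Rightarrow> y[i - 1 := a, i := b]) = z"
      using z \<open>length y = k\<close> \<open>1 \<le> i\<close> \<open>i < k\<close>
      by (auto simp: pair_at_def agree_off_def Words_def list_eq_iff_nth_eq nth_list_update)
  next
    fix ab assume "ab \<in> ?S"
    then show "pair_at i (case ab of (a, b) \<Rightarrow> y[i - 1 := a, i := b]) = ab"
      and "(case ab of (a, b) \<Rightarrow> y[i - 1 := a, i := b]) \<in> ?A"
      using y \<open>length y = k\<close> \<open>1 \<le> i\<close> \<open>i < k\<close>
      by (auto simp: pair_at_def agree_off_def Words_def nth_list_update
          dest!: subsetD[OF set_update_subset_insert])
  qed simp
  also have "\<dots> = local_op i (mmul ?S F G) y x"
    using True by (simp add: local_op_def mmul_def)
  finally show ?thesis .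
qed

lemma local_op_cubic_relation:
  assumes "cubic_relation (Vbasis l \<times> Vbasis l) F \<mu>1 \<mu>2 \<mu>3" and "1 \<le> i" "i < k"
  shows "cubic_relation (Words l k) (local_op i F) \<mu>1 \<mu>2 \<mu>3"
proof -
  let ?S = "Vbasis l \<times> Vbasis l" and ?W = "Words l k"
  let ?F = "\<lambda>\<mu> a b. F a b - \<mu> * mid a b"
  have minus: "local_op i F a b - \<mu> * mid a b = local_op i (?F \<mu>) a b" if "a \<in> ?W" "b \<in> ?W" for a b \<mu>
    using that \<open>i < k\<close> by (intro local_op_minus_mid) (auto simp: Words_def)
  have inner: "mmul ?W (\<lambda>y x. local_op i F y x - \<mu>1 * mid y x) (\<lambda>y x. local_op i F y x - \<mu>2 * mid y x) a b
      = local_op i (mmul ?S (?F \<mu>1) (?F \<mu>2)) a b" if "a \<in> ?W" "b \<in> ?W" for a b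
    using mmul_cong[OF minus minus that] mmul_local_op[OF that \<open>1 \<le> i\<close> \<open>i < k\<close>] by simp
  have "mmul ?W (mmul ?W (\<lambda>y x. local_op i F y x - \<mu>1 * mid y x) (\<lambda>y x. local_op i F y x - \<mu>2 * mid y x))
      (\<lambda>y x. local_op i F y x - \<mu>3 * mid y x) y x
    = local_op i (mmul ?S (mmul ?S (?F \<mu>1) (?F \<mu>2)) (?F \<mu>3)) y x" if "y \<in> ?W" "x \<in> ?W" for y x
    using mmul_cong[OF inner minus that] mmul_local_op[OF that \<open>1 \<le> i\<close> \<open>i < k\<close>] by simp
  moreover have "local_op i (mmul ?S (mmul ?S (?F \<mu>1) (?F \<mu>2)) (?F \<mu>3)) y x = 0"
    if "y \<in> ?W" "x \<in> ?W" for y x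
    using assms(1) pair_at_in_Words[OF that(1) \<open>i < k\<close>] pair_at_in_Words[OF that(2) \<open>i < k\<close>]
    unfolding cubic_relation_def local_op_def by (simp only: if_cancel)
  ultimately show ?thesis
    by (simp add: cubic_relation_def)
qed

section \<open>The module V(3, r)\<close>

(* q^(r^2 + 2r) Rcheck on V(3, r) (x) V(3, r), with u standing for q^(-r) (see Rcheck_3_eq) *)
fun Rcheck3_normalized :: "'a::field \<Rightarrow> 'a \<Rightarrow> nat \<times> nat \<Rightarrow> nat \<times> nat \<Rightarrow> 'a" where
  "Rcheck3_normalized q u (y1, y2) (x1, x2) =
     (if x1 \<le> y2 \<and> y1 + (y2 - x1) = x2
      then (\<Prod>j\<in>{y1..<x2}. alpha q 3 j) / qfact q (y2 - x1)
           * u powi (int x1 - int y1) * q powi ((int x1 - 1) * (int y1 - 3))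
      else 0)"

lemma Vbasis_3: "Vbasis 3 = {1, 2, 3}"
  by (auto simp: Vbasis_def)

lemma sum_Vbasis_3_Times:
  "(\<Sum>z\<in>Vbasis 3 \<times> Vbasis 3. f z) =
    f (1, 1) + f (1, 2) + f (1, 3) + f (2, 1) + f (2, 2) + f (2, 3) + f (3, 1) + f (3, 2) + f (3, 3)"
  by (simp add: Vbasis_3 add.assoc)

(* stated with Suc 0, the simp normal form of 1 :: nat in which they are needed *)
lemma alpha_3_1: "q \<noteq> 1 \<Longrightarrow> alpha q 3 (Suc 0) = 1 - inverse (q ^ 2)"
  by (simp add: alpha_def power_int_minus)

lemma alpha_3_2: "q \<noteq> 1 \<Longrightarrow> alpha q 3 2 = (1 + q) * (1 - inverse q)"
  by (simp add: alpha_def power_int_minus field_simps power2_eq_square)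

lemma qfact_0: "qfact q 0 = 1"
  by (simp add: qfact_def)

lemma qfact_1: "qfact q (Suc 0) = 1"
  by (simp add: qfact_def qint_def)

lemma qfact_2: "qfact q 2 = 1 + q"
  by (simp add: qfact_def qint_def numeral_2_eq_2)

lemma Rcheck3_normalized_cubic_relation:
  fixes q u :: "'a::field"
  assumes "q \<noteq> 0" "q \<noteq> 1" "q \<noteq> -1" "u \<noteq> 0"
  shows "cubic_relation (Vbasis 3 \<times> Vbasis 3) (Rcheck3_normalized q u) 1 (- inverse (q ^ 2)) (inverse (q ^ 3))"
  unfolding cubic_relation_def
proof (intro ballI, goal_cases)
  case (1 a b)
  moreover have "1 + q \<noteq> 0" using assms(3) by (metis add.commute add_eq_0_iff)
  ultimately show ?case
    unfolding mmul_def sum_Vbasis_3_Times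
    \<comment> \<open>entrywise; hypsubst_thin drops the equations between index pairs, which defeat algebra\<close>
    apply (simp add: Vbasis_3)
    apply (elim disjE; hypsubst_thin; simp add: mid_def atLeastLessThan_nat_numeral
        alpha_3_1 alpha_3_2 qfact_0 qfact_1 qfact_2 power_int_minus assms)
    apply (simp_all add: field_simps assms)
     apply algebra+
    done
qed

lemma Rcheck_3_eq:
  fixes q :: "'a::field_char_0"
  assumes q: "primitive_root n q" and "3 \<le> n"
    and "a \<in> Vbasis 3 \<times> Vbasis 3" "b \<in> Vbasis 3 \<times> Vbasis 3"
  shows "Rcheck n q 3 r a b = q powi (- (r^2) - 2*r) * Rcheck3_normalized q (q powi (- r)) a b"
proof -
  obtain y1 y2 x1 x2 where ab: "a = (y1, y2)" "b = (x1, x2)" by (cases a, cases b)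
  have "q \<noteq> 0" using primitive_root_nonzero[OF q] \<open>3 \<le> n\<close> by simp
  have "q powi (- (r^2) - 2*r) * (q powi (- r)) powi (int x1 - int y1) * q powi ((int x1 - 1) * (int y1 - 3))
      = q powi ((- (r^2) - 2*r) + (- r) * (int x1 - int y1) + (int x1 - 1) * (int y1 - 3))"
    by (simp only: power_int_mult [symmetric] power_int_add [OF disjI1 [OF \<open>q \<noteq> 0\<close>], symmetric])
  also have "(- (r^2) - 2*r) + (- r) * (int x1 - int y1) + (int x1 - 1) * (int y1 - 3)
      = (r + int x1 - 1) * (int y1 - (r + 3))"
    by (simp add: algebra_simps power2_eq_square)
  finally have exponent: "q powi ((r + int x1 - 1) * (int y1 - (r + 3)))
      = q powi (- (r^2) - 2*r) * (q powi (- r)) powi (int x1 - int y1) * q powi ((int x1 - 1) * (int y1 - 3))"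
    by simp
  have "Rcheck n q 3 r a b = Rmat n q 3 r (y2, y1) (x1, x2)"
    by (simp add: Rcheck_def ab)
  also have "\<dots> = (if x1 \<le> y2 \<and> y1 + (y2 - x1) = x2
      then (\<Prod>j\<in>{y1..<x2}. alpha q 3 j) / qfact q (y2 - x1) * q powi ((r + int x1 - 1) * (int y1 - (r + int 3)))
      else 0)"
    by (rule Rmat_eq[OF q \<open>3 \<le> n\<close>]) (use assms(3,4) ab in auto)
  also have "\<dots> = q powi (- (r^2) - 2*r) * Rcheck3_normalized q (q powi (- r)) a b"
    unfolding of_nat_numeral exponent by (auto simp: ab mult_ac)
  finally show ?thesis .
qed

lemma Rcheck_3_cubic_relation:
  fixes q :: "'a::field_char_0"
  assumes q: "primitive_root n q" and "3 \<le> n"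
  shows "cubic_relation (Vbasis 3 \<times> Vbasis 3) (Rcheck n q 3 r)
    (q powi (- (r^2) - 2*r)) (- (q powi (- (r^2) - 2*r - 2))) (q powi (- (r^2) - 2*r - 3))"
proof -
  have "q \<noteq> 0" using primitive_root_nonzero[OF q] \<open>3 \<le> n\<close> by simp
  have "q ^ 1 \<noteq> 1" "q ^ 2 \<noteq> 1"
    using q \<open>3 \<le> n\<close> unfolding primitive_root_def by auto
  then have "q \<noteq> 1" "q \<noteq> -1" by auto
  have shift: "q powi (- (r^2) - 2*r - int j) = q powi (- (r^2) - 2*r) * inverse (q ^ j)" for j
    by (simp only: power_int_diff [OF disjI1 [OF \<open>q \<noteq> 0\<close>]] power_int_of_nat divide_inverse)
  have "cubic_relation (Vbasis 3 \<times> Vbasis 3) (Rcheck n q 3 r)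
      (q powi (- (r^2) - 2*r) * 1) (q powi (- (r^2) - 2*r) * - inverse (q ^ 2))
      (q powi (- (r^2) - 2*r) * inverse (q ^ 3))"
    using \<open>q \<noteq> 0\<close> \<open>q \<noteq> 1\<close> \<open>q \<noteq> -1\<close>
    by (intro cubic_relation_scale[OF Rcheck_3_eq[OF q \<open>3 \<le> n\<close>] Rcheck3_normalized_cubic_relation])
      simp_all
  then show ?thesis
    using shift[of 2] shift[of 3] by simp
qed

theorem mainTheorem7:
  fixes q :: "'a::field_char_0" and n k i :: nat and r :: int
  assumes "alg_closed_field TYPE('a)"
    and "n \<ge> 5"
    and "primitive_root n q"
    and "k \<ge> 2"
    and "1 \<le> i" and "i \<le> k - 1"
  shows "\<forall>y\<in>Words 3 k. \<forall>x\<in>Words 3 k.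
    mmul (Words 3 k)
      (mmul (Words 3 k)
        (\<lambda>y x. Rcheck_i n q 3 r i y x - q powi (- (r^2) - 2*r) * mid y x)
        (\<lambda>y x. Rcheck_i n q 3 r i y x + q powi (- (r^2) - 2*r - 2) * mid y x))
      (\<lambda>y x. Rcheck_i n q 3 r i y x - q powi (- (r^2) - 2*r - 3) * mid y x) y x = 0"
proof -
  have "3 \<le> n" "1 \<le> i" "i < k" using assms(2,4-6) by auto
  then have "cubic_relation (Words 3 k) (Rcheck_i n q 3 r i)
      (q powi (- (r^2) - 2*r)) (- (q powi (- (r^2) - 2*r - 2))) (q powi (- (r^2) - 2*r - 3))"
    unfolding Rcheck_i_eq_local_op by (intro local_op_cubic_relation Rcheck_3_cubic_relation assms(3))
  then show ?thesis by (simp add: cubic_relation_def)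
qed

end
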